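(* Consider multiclass data $(x,y)$ with $x\in\mathcal{X}\subseteq\mathbb{R}^d$ drawn from a fixed distribution and labels $y\in\{1,\dots,k\}$, where $k\ge2$. A binary decision tree is grown top-down from a single root leaf. At each step $t=1,2,\dots$, the leaf $m$ of largest weight is split into two children using a hypothesis $h_m:\mathcal{X}\to\{-1,1\}$: $h_m(x)=1$ sends $x$ to the right child and $h_m(x)=-1$ sends it to the left child. After $t$ steps the tree has $t$ internal nodes. Assume the Weak Hypothesis Assumption holds with parameter $\gamma$: there is $\gamma>0$ such that for every split node $m$, \[ \gamma\le\min(\beta_m,1-\beta_m)\quad\text{and}\quad \tfrac12 J(h_m)=\sum_{i=1}^k\pi_{m,i}\,|P_{m,i}-\beta_m|\ge\gamma . \] Then for any $\alpha\in[0,2(1-\frac1k)]$, the Gini-entropy after $t$ splits satisfies $G_t^g\le\alpha$ whenever \[ t\ \ge\ \left(\frac{2(1-\frac1k)}{\alpha}\right)^{\frac{2(1-\gamma)^2}{\gamma^2\log_2 e}(k-1)}. \]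
   Context: For a node $m$, $w_m$ is the probability that $x$ reaches $m$. $\pi_{m,i}$ is the probability that $x$ has label $i$ given that it reaches $m$. $\beta_m=P(h_m(x)>0)$ and $P_{m,i}=P(h_m(x)>0\mid i)$, both computed for $x$ conditioned on reaching $m$ (the latter also conditioned on label $i$). Thus \[ J(h_m)=2\sum_i\pi_{m,i}\,|\beta_m-P_{m,i}|. \] For the tree after $t$ splits with leaf set $\mathcal{L}$, \[ G_t^g=\sum_{l\in\mathcal{L}}w_l\sum_{i=1}^k\pi_{l,i}(1-\pi_{l,i}). \] *)

theory Defs
  imports "HOL-Probability.Probability"
begin

text \<open>A tree node is identified with its region R (the set of inputs x that reach it).
  Conditional probabilities are ratios; when the conditioning event has probability 0
  the ratio is 0 (Isabelle convention x/0 = 0).\<close>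

definition node_weight :: "('x \<times> nat) measure \<Rightarrow> 'x set \<Rightarrow> real" where
  "node_weight M R = measure M {z \<in> space M. fst z \<in> R}"

definition node_pi :: "('x \<times> nat) measure \<Rightarrow> 'x set \<Rightarrow> nat \<Rightarrow> real" where
  "node_pi M R i = measure M {z \<in> space M. fst z \<in> R \<and> snd z = i} / node_weight M R"

definition node_beta :: "('x \<times> nat) measure \<Rightarrow> 'x set \<Rightarrow> ('x \<Rightarrow> int) \<Rightarrow> real" where
  "node_beta M R h = measure M {z \<in> space M. fst z \<in> R \<and> h (fst z) > 0} / node_weight M R"

definition node_P :: "('x \<times> nat) measure \<Rightarrow> 'x set \<Rightarrow> ('x \<Rightarrow> int) \<Rightarrow> nat \<Rightarrow> real" where
  "node_P M R h i =
     measure M {z \<in> space M. fst z \<in> R \<and> h (fst z) > 0 \<and> snd z = i}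
     / measure M {z \<in> space M. fst z \<in> R \<and> snd z = i}"

definition split_J :: "('x \<times> nat) measure \<Rightarrow> nat \<Rightarrow> 'x set \<Rightarrow> ('x \<Rightarrow> int) \<Rightarrow> real" where
  "split_J M k R h = 2 * (\<Sum>i\<in>{1..k}. node_pi M R i * \<bar>node_beta M R h - node_P M R h i\<bar>)"

definition gini_entropy :: "('x \<times> nat) measure \<Rightarrow> nat \<Rightarrow> 'x set list \<Rightarrow> real" where
  "gini_entropy M k L =
     sum_list (map (\<lambda>l. node_weight M l * (\<Sum>i\<in>{1..k}. node_pi M l i * (1 - node_pi M l i))) L)"

definition split_leaf :: "'x set list \<Rightarrow> nat \<Rightarrow> ('x \<Rightarrow> int) \<Rightarrow> 'x set list" where
  "split_leaf L j h = take j L @ drop (Suc j) L @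
     [L ! j \<inter> {x. h x = -1}, L ! j \<inter> {x. h x = 1}]"

end

theory Submission
  imports Defs
begin

text \<open>With label masses \<open>a\<^sub>i\<close> and weight \<open>w\<close>, a leaf contributes
  \<open>\<Sum>\<^sub>i a\<^sub>i (1 - a\<^sub>i / w)\<close> to the Gini-entropy. Splitting it into children
  with masses \<open>b\<^sub>i, c\<^sub>i\<close> and weights \<open>w\<^sub>1, w\<^sub>2\<close> lowers the entropy by
  \<open>\<Sum>\<^sub>i (b\<^sub>i w\<^sub>2 - c\<^sub>i w\<^sub>1)\<^sup>2 / (w\<^sub>1 w\<^sub>2 w)\<close>, while the weak hypothesis
  assumption says \<open>\<Sum>\<^sub>i |b\<^sub>i w\<^sub>2 - c\<^sub>i w\<^sub>1| \<ge> \<gamma> w\<^sup>2\<close>; by Cauchy-Schwarz and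
  \<open>4 w\<^sub>1 w\<^sub>2 \<le> w\<^sup>2\<close> the drop is at least \<open>4 \<gamma>\<^sup>2 w / k\<close>. The split leaf is the
  heaviest of \<open>s + 1\<close> leaves of total weight 1, so \<open>w \<ge> 1 / (s + 1)\<close> and
  \<open>G\<^sub>t \<le> (1 - 1/k) - (4 \<gamma>\<^sup>2 / k) H\<^sub>t \<le> (1 - 1/k) - (4 \<gamma>\<^sup>2 / k) ln (t + 1)\<close>,
  which the lower bound on \<open>t\<close> pushes below \<open>\<alpha>\<close>.\<close>

definition weighted_gini :: "'i set \<Rightarrow> ('i \<Rightarrow> real) \<Rightarrow> real \<Rightarrow> real" where
  "weighted_gini I a w = (\<Sum>i\<in>I. a i * (1 - a i / w))"

lemma weighted_gini_split:
  assumes "w1 > 0" "w2 > 0"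
  shows "weighted_gini I (\<lambda>i. b i + c i) (w1 + w2) - weighted_gini I b w1 - weighted_gini I c w2
       = (\<Sum>i\<in>I. (b i * w2 - c i * w1)\<^sup>2) / (w1 * w2 * (w1 + w2))"
proof -
  have "(b i + c i) * (1 - (b i + c i) / (w1 + w2)) - b i * (1 - b i / w1) - c i * (1 - c i / w2)
      = (b i * w2 - c i * w1)\<^sup>2 / (w1 * w2 * (w1 + w2))" for i
    using assms add_pos_pos [OF assms]
    by (simp add: divide_simps power2_eq_square) (simp add: algebra_simps)
  then show ?thesis
    unfolding weighted_gini_def by (simp add: sum_subtractf [symmetric] sum_divide_distrib)
qed

lemma split_imbalance_eq:
  fixes b c :: real
  assumes "b \<ge> 0" "c \<ge> 0" "w1 + w2 > 0"
  shows "(b + c) / (w1 + w2) * \<bar>w2 / (w1 + w2) - c / (b + c)\<bar> = \<bar>b * w2 - c * w1\<bar> / (w1 + w2)\<^sup>2"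
proof (cases "b + c = 0")
  case True
  with assms have "b = 0" "c = 0" by auto
  then show ?thesis by simp
next
  case False
  with assms have "b + c > 0" by linarith
  then have "w2 / (w1 + w2) - c / (b + c) = (b * w2 - c * w1) / ((w1 + w2) * (b + c))"
    using assms by (simp add: field_simps)
  with \<open>b + c > 0\<close> assms show ?thesis
    by (simp add: abs_divide abs_mult power2_eq_square)
qed

lemma weighted_gini_split_gain:
  fixes b c :: "'i \<Rightarrow> real"
  assumes "w1 > 0" "w2 > 0" "\<gamma> \<ge> 0"
    and imbalance: "\<gamma> \<le> (\<Sum>i\<in>I. \<bar>b i * w2 - c i * w1\<bar>) / (w1 + w2)\<^sup>2"
  shows "4 * \<gamma>\<^sup>2 * (w1 + w2) / card I
      \<le> weighted_gini I (\<lambda>i. b i + c i) (w1 + w2) - weighted_gini I b w1 - weighted_gini I c w2"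
proof -
  define w where "w = w1 + w2"
  define d where "d i = b i * w2 - c i * w1" for i
  have w: "w > 0" "w1 * w2 * w > 0" using assms by (simp_all add: w_def)
  have "\<gamma> * w\<^sup>2 \<le> (\<Sum>i\<in>I. \<bar>d i\<bar>)"
    using imbalance w by (simp add: w_def d_def field_simps)
  then have "(\<gamma> * w\<^sup>2)\<^sup>2 \<le> (\<Sum>i\<in>I. \<bar>d i\<bar>)\<^sup>2"
    using assms by (intro power_mono) auto
  also have "\<dots> \<le> (\<Sum>i\<in>I. (d i)\<^sup>2) * card I"
    using sum_squared_le_sum_of_squares [of "\<lambda>i. \<bar>d i\<bar>" I] by simp
  finally have cauchy_schwarz: "\<gamma>\<^sup>2 * w ^ 4 \<le> (\<Sum>i\<in>I. (d i)\<^sup>2) * card I"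
    by (simp add: power_mult_distrib flip: power_mult)
  have "4 * (w1 * w2) \<le> w\<^sup>2"
    using sum_power2_ge_zero [of "w1 - w2" 0] by (simp add: w_def power2_eq_square algebra_simps)
  then have "4 * (w1 * w2) * (\<gamma>\<^sup>2 * w\<^sup>2) \<le> w\<^sup>2 * (\<gamma>\<^sup>2 * w\<^sup>2)"
    by (intro mult_right_mono) auto
  then have "4 * \<gamma>\<^sup>2 * w * (w1 * w2 * w) \<le> \<gamma>\<^sup>2 * w ^ 4"
    by (simp add: power2_eq_square power4_eq_xxxx algebra_simps)
  also note cauchy_schwarz
  finally have "4 * \<gamma>\<^sup>2 * w / card I \<le> (\<Sum>i\<in>I. (d i)\<^sup>2) / (w1 * w2 * w)"
    using w by (cases "card I = 0") (simp_all add: field_simps sum_nonneg)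
  then show ?thesis
    by (simp only: weighted_gini_split [OF assms(1,2)] w_def d_def)
qed

lemma weighted_gini_le:
  assumes "card I \<ge> 2" "w > 0" "(\<Sum>i\<in>I. a i) \<le> w"
  shows "weighted_gini I a w \<le> w * (1 - 1 / card I)"
proof -
  define S where "S = (\<Sum>i\<in>I. a i)"
  define n where "n = real (card I)"
  have n: "n \<ge> 2" using assms(1) by (simp add: n_def)
  have "S\<^sup>2 \<le> (\<Sum>i\<in>I. (a i)\<^sup>2) * n"
    using sum_squared_le_sum_of_squares [of a I] by (simp add: S_def n_def)
  then have "weighted_gini I a w \<le> S - S\<^sup>2 / (n * w)"
    using n assms(2) by (simp add: weighted_gini_def S_def algebra_simps power2_eq_square sum_subtractf
        sum_divide_distrib [symmetric] sum_distrib_left [symmetric] field_simps)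
  also have "\<dots> \<le> w * (1 - 1 / n)"
  proof -
    have "w \<le> w * (n - 1)" using assms(2) n by simp
    then have "0 \<le> (w - S) * (w * (n - 1) - S)"
      using assms(3) by (intro mult_nonneg_nonneg) (auto simp: S_def)
    moreover have "w * (1 - 1 / n) - (S - S\<^sup>2 / (n * w)) = (w - S) * (w * (n - 1) - S) / (n * w)"
      using n assms(2) by (simp add: field_simps power2_eq_square)
    moreover have "0 < n * w" using n assms(2) by simp
    ultimately show ?thesis using divide_nonneg_pos [of "(w - S) * (w * (n - 1) - S)" "n * w"] by linarith
  qed
  finally show ?thesis by (simp add: n_def)
qed

lemma gini_bound_below_target:
  fixes k t :: nat and \<gamma> \<alpha> :: real
  assumes "k > 0" "0 < \<gamma>" "\<gamma> \<le> 1/2" "0 < \<alpha>"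
    and t_large: "real t \<ge> (2 * (1 - 1 / real k) / \<alpha>) powr
        (2 * (1 - \<gamma>)\<^sup>2 / (\<gamma>\<^sup>2 * log 2 (exp 1)) * (real k - 1))"
  shows "(1 - 1 / real k) - 4 * \<gamma>\<^sup>2 / real k * ln (real t + 1) \<le> \<alpha>"
proof (cases "\<alpha> < 1 - 1 / real k")
  case False
  moreover have "0 \<le> 4 * \<gamma>\<^sup>2 / real k * ln (real t + 1)" by simp
  ultimately show ?thesis by linarith
next
  case True
  define q where "q = 1 - 1 / real k"
  define B where "B = 2 * q / \<alpha>"
  define E where "E = 2 * (1 - \<gamma>)\<^sup>2 / (\<gamma>\<^sup>2 * log 2 (exp 1)) * (real k - 1)"
  have q: "\<alpha> < q" "q > 0"
    using True assms(4) by (simp_all add: q_def)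
  have "ln B = ln 2 + ln (q / \<alpha>)"
    using q assms(4) ln_mult [of 2 "q / \<alpha>"] by (simp add: B_def)
  moreover have "ln (q / \<alpha>) \<ge> 1 - \<alpha> / q"
    using ln_le_minus_one [of "\<alpha> / q"] q assms by (simp add: ln_div)
  ultimately have lnB: "ln B \<ge> 1 - \<alpha> / q"
    using ln_ge_zero [of 2] by linarith
  moreover have "\<alpha> / q < 1" using q by simp
  ultimately have "ln B \<ge> 0" by linarith
  have "B > 0" using q assms(4) by (simp add: B_def)
  have tB: "B powr E \<le> real t" using t_large by (simp only: B_def E_def q_def)
  have "0 < B powr E" using \<open>B > 0\<close> by simp
  with tB have "0 < real t" by linarith
  have "E * ln B = ln (B powr E)" by simp
  also have "\<dots> \<le> ln (real t)"
    using tB \<open>0 < B powr E\<close> by (rule ln_mono)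
  also have "\<dots> \<le> ln (real t + 1)"
    using \<open>0 < real t\<close> by simp
  finally have lnt: "E * ln B \<le> ln (real t + 1)" .
  have "(1/2)\<^sup>2 \<le> (1 - \<gamma>)\<^sup>2" using assms(3) by (intro power_mono) auto
  then have "1/4 * (2/3) \<le> (1 - \<gamma>)\<^sup>2 * ln 2"
    using ln2_ge_two_thirds by (intro mult_mono) (auto simp: power2_eq_square)
  then have "q \<le> q * (8 * (1 - \<gamma>)\<^sup>2 * ln 2)"
    using q(2) by (simp add: mult_le_cancel_left1)
  also have "\<dots> = 4 * \<gamma>\<^sup>2 / real k * E"
    using assms(1,2) by (simp add: E_def q_def log_def field_simps power2_eq_square)
  finally have "q * ln B \<le> 4 * \<gamma>\<^sup>2 / real k * E * ln B"
    using \<open>ln B \<ge> 0\<close> by (rule mult_right_mono)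
  also have "\<dots> \<le> 4 * \<gamma>\<^sup>2 / real k * ln (real t + 1)"
    using mult_left_mono [OF lnt, of "4 * \<gamma>\<^sup>2 / real k"] by (simp add: mult.assoc)
  finally have "q * ln B \<le> 4 * \<gamma>\<^sup>2 / real k * ln (real t + 1)" .
  moreover have "q - \<alpha> \<le> q * ln B"
    using mult_left_mono [OF lnB, of q] q by (simp add: right_diff_distrib)
  ultimately show ?thesis by (simp add: q_def)
qed

definition label_mass :: "('x \<times> nat) measure \<Rightarrow> 'x set \<Rightarrow> nat \<Rightarrow> real" where
  "label_mass M R i = measure M {z \<in> space M. fst z \<in> R \<and> snd z = i}"

definition node_gini :: "('x \<times> nat) measure \<Rightarrow> nat \<Rightarrow> 'x set \<Rightarrow> real" where
  "node_gini M k R = node_weight M R * (\<Sum>i\<in>{1..k}. node_pi M R i * (1 - node_pi M R i))"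

lemma gini_entropy_eq_sum_node_gini: "gini_entropy M k L = sum_list (map (node_gini M k) L)"
  unfolding gini_entropy_def node_gini_def ..

lemma node_gini_eq_weighted_gini:
  assumes "node_weight M R \<noteq> 0"
  shows "node_gini M k R = weighted_gini {1..k} (label_mass M R) (node_weight M R)"
proof -
  have "w * (a / w * (1 - a / w)) = a * (1 - a / w)" if "w \<noteq> 0" for w a :: real
    using that by simp
  then show ?thesis
    using assms unfolding node_gini_def weighted_gini_def node_pi_def label_mass_def sum_distrib_left
    by simp
qed

lemma length_split_leaf: "j < length L \<Longrightarrow> length (split_leaf L j h) = Suc (length L)"
  by (simp add: split_leaf_def)

lemma set_split_leaf:
  "set (split_leaf L j h) \<subseteq> set L \<union> {L ! j \<inter> {x. h x = -1}, L ! j \<inter> {x. h x = 1}}"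
  using set_take_subset [of j L] set_drop_subset [of "Suc j" L] by (auto simp: split_leaf_def)

lemma sum_list_split_leaf:
  fixes f :: "'x set \<Rightarrow> 'a::ab_group_add"
  assumes "j < length L"
  shows "sum_list (map f (split_leaf L j h))
       = sum_list (map f L) - f (L ! j) + f (L ! j \<inter> {x. h x = -1}) + f (L ! j \<inter> {x. h x = 1})"
proof -
  have "sum_list (map f L) = sum_list (map f (take j L @ L ! j # drop (Suc j) L))"
    by (simp only: id_take_nth_drop [OF assms, symmetric])
  then show ?thesis by (simp add: split_leaf_def)
qed

locale labelled_sample = prob_space M
  for M :: "('x::topological_space \<times> nat) measure" +
  assumes sets_eq: "sets M = sets (borel \<Otimes>\<^sub>M count_space UNIV)"
begin

lemma measurable_feature [measurable]: "fst \<in> M \<rightarrow>\<^sub>M borel"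
  by (subst measurable_cong_sets [OF sets_eq refl]) simp

lemma measurable_label [measurable]: "snd \<in> M \<rightarrow>\<^sub>M count_space UNIV"
  by (subst measurable_cong_sets [OF sets_eq refl]) simp

lemma measure_region_split:
  fixes h :: "'x \<Rightarrow> int"
  assumes [measurable]: "R \<in> sets borel" "h \<in> borel_measurable borel"
    and signs: "AE z in M. h (fst z) \<in> {-1, 1}"
  shows "measure M {z \<in> space M. fst z \<in> R \<and> Q (snd z)} =
           measure M {z \<in> space M. fst z \<in> R \<inter> {x. h x = -1} \<and> Q (snd z)}
         + measure M {z \<in> space M. fst z \<in> R \<inter> {x. h x = 1} \<and> Q (snd z)}"
    and "measure M {z \<in> space M. fst z \<in> R \<and> h (fst z) > 0 \<and> Q (snd z)} =
           measure M {z \<in> space M. fst z \<in> R \<inter> {x. h x = 1} \<and> Q (snd z)}"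
proof -
  let ?A = "\<lambda>S. {z \<in> space M. fst z \<in> S \<and> Q (snd z)}"
  have [measurable]: "?A (R \<inter> {x. h x = c}) \<in> sets M" for c
    by measurable
  have "measure M (?A R) = measure M (?A (R \<inter> {x. h x = -1}) \<union> ?A (R \<inter> {x. h x = 1}))"
    by (rule finite_measure_eq_AE) (use signs in \<open>auto elim!: AE_mp\<close>)
  also have "\<dots> = measure M (?A (R \<inter> {x. h x = -1})) + measure M (?A (R \<inter> {x. h x = 1}))"
    by (rule finite_measure_Union) auto
  finally show "measure M (?A R) = measure M (?A (R \<inter> {x. h x = -1})) + measure M (?A (R \<inter> {x. h x = 1}))" .
  show "measure M {z \<in> space M. fst z \<in> R \<and> h (fst z) > 0 \<and> Q (snd z)} = measure M (?A (R \<inter> {x. h x = 1}))"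
    by (rule finite_measure_eq_AE) (use signs in \<open>auto elim!: AE_mp\<close>)
qed

lemma split_node_masses:
  fixes h :: "'x \<Rightarrow> int"
  assumes "R \<in> sets borel" "h \<in> borel_measurable borel"
    and "AE z in M. h (fst z) \<in> {-1, 1}"
  defines "Rl \<equiv> R \<inter> {x. h x = -1}" and "Rr \<equiv> R \<inter> {x. h x = 1}"
  shows "node_weight M R = node_weight M Rl + node_weight M Rr"
    and "label_mass M R i = label_mass M Rl i + label_mass M Rr i"
    and "node_beta M R h = node_weight M Rr / node_weight M R"
    and "node_P M R h i = label_mass M Rr i / label_mass M R i"
  using measure_region_split [OF assms(1-3), of "\<lambda>_. True"]
    measure_region_split [OF assms(1-3), of "\<lambda>y. y = i"]
  by (simp_all add: node_weight_def label_mass_def node_beta_def node_P_def Rl_def Rr_def)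

lemma sum_label_mass_le:
  assumes [measurable]: "R \<in> sets borel" and "finite I"
  shows "(\<Sum>i\<in>I. label_mass M R i) \<le> node_weight M R"
proof -
  have "(\<Sum>i\<in>I. label_mass M R i) = measure M (\<Union>i\<in>I. {z \<in> space M. fst z \<in> R \<and> snd z = i})"
    unfolding label_mass_def using \<open>finite I\<close>
    by (intro finite_measure_finite_Union [symmetric]) (auto simp: disjoint_family_on_def)
  also have "\<dots> \<le> node_weight M R"
    unfolding node_weight_def by (intro finite_measure_mono) auto
  finally show ?thesis .
qed

lemma split_gini_gain:
  fixes h :: "'x \<Rightarrow> int"
  assumes "R \<in> sets borel" "h \<in> borel_measurable borel"
    and "AE z in M. h (fst z) \<in> {-1, 1}"
    and "\<gamma> > 0"
    and balance: "\<gamma> \<le> min (node_beta M R h) (1 - node_beta M R h)"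
    and purity: "\<gamma> \<le> split_J M k R h / 2"
  shows "4 * \<gamma>\<^sup>2 * node_weight M R / k
      \<le> node_gini M k R - node_gini M k (R \<inter> {x. h x = -1}) - node_gini M k (R \<inter> {x. h x = 1})"
proof -
  define w1 where "w1 = node_weight M (R \<inter> {x. h x = -1})"
  define w2 where "w2 = node_weight M (R \<inter> {x. h x = 1})"
  define b where "b = label_mass M (R \<inter> {x. h x = -1})"
  define c where "c = label_mass M (R \<inter> {x. h x = 1})"
  note masses = split_node_masses [OF assms(1-3), folded w1_def w2_def b_def c_def]
  have nonneg: "w1 \<ge> 0" "w2 \<ge> 0" "b i \<ge> 0" "c i \<ge> 0" for i
    by (simp_all add: w1_def w2_def b_def c_def node_weight_def label_mass_def)
  have "0 < \<gamma>" "\<gamma> \<le> w2 / (w1 + w2)" "\<gamma> \<le> 1 - w2 / (w1 + w2)"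
    using \<open>\<gamma> > 0\<close> balance by (simp_all add: masses)
  then have "w2 \<noteq> 0" "w1 \<noteq> 0"
    by (auto simp: divide_self_if split: if_splits)
  with nonneg(1,2) have w: "w1 > 0" "w2 > 0"
    by simp_all
  have "\<gamma> \<le> (\<Sum>i\<in>{1..k}. (b i + c i) / (w1 + w2) * \<bar>w2 / (w1 + w2) - c i / (b i + c i)\<bar>)"
    using purity by (simp add: split_J_def node_pi_def masses flip: label_mass_def)
  also have "\<dots> = (\<Sum>i\<in>{1..k}. \<bar>b i * w2 - c i * w1\<bar>) / (w1 + w2)\<^sup>2"
    unfolding sum_divide_distrib using nonneg w by (intro sum.cong refl split_imbalance_eq) auto
  finally have "4 * \<gamma>\<^sup>2 * (w1 + w2) / card {1..k}
      \<le> weighted_gini {1..k} (\<lambda>i. b i + c i) (w1 + w2) - weighted_gini {1..k} b w1 - weighted_gini {1..k} c w2"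
    using w \<open>\<gamma> > 0\<close> by (intro weighted_gini_split_gain) auto
  moreover have "label_mass M R = (\<lambda>i. b i + c i)"
    using masses(2) by blast
  ultimately show ?thesis
    using w by (simp add: node_gini_eq_weighted_gini masses(1) flip: w1_def w2_def b_def c_def)
qed

lemma node_gini_UNIV_le:
  assumes "k \<ge> 2"
  shows "node_gini M k UNIV \<le> 1 - 1 / k"
proof -
  have "node_weight M UNIV = 1"
    by (simp add: node_weight_def prob_space)
  moreover have "(\<Sum>i\<in>{1..k}. label_mass M UNIV i) \<le> node_weight M UNIV"
    by (rule sum_label_mass_le) auto
  ultimately show ?thesis
    using weighted_gini_le [of "{1..k}" 1 "label_mass M UNIV"] assms
    by (simp add: node_gini_eq_weighted_gini)
qed

lemma greedy_split_step:
  fixes h :: "'x \<Rightarrow> int"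
  assumes j: "j < length L" and leaves: "set L \<subseteq> sets borel"
    and total: "sum_list (map (node_weight M) L) = 1"
    and largest: "\<forall>l\<in>set L. node_weight M l \<le> node_weight M (L ! j)"
    and h: "h \<in> borel_measurable borel" "AE z in M. h (fst z) \<in> {-1, 1}"
    and "k > 0" "\<gamma> > 0"
    and "\<gamma> \<le> min (node_beta M (L ! j) h) (1 - node_beta M (L ! j) h)"
    and "\<gamma> \<le> split_J M k (L ! j) h / 2"
  shows "set (split_leaf L j h) \<subseteq> sets borel"
    and "sum_list (map (node_weight M) (split_leaf L j h)) = 1"
    and "gini_entropy M k (split_leaf L j h) \<le> gini_entropy M k L - 4 * \<gamma>\<^sup>2 / (k * length L)"
proof -
  have Lj: "L ! j \<in> sets borel" using j leaves by auto
  have [measurable]: "{x. h x = c} \<in> sets borel" for c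
    using h(1) by measurable
  show "set (split_leaf L j h) \<subseteq> sets borel"
    using set_split_leaf [of L j h] leaves Lj by auto
  show "sum_list (map (node_weight M) (split_leaf L j h)) = 1"
    using total split_node_masses(1) [OF Lj h] by (simp add: sum_list_split_leaf [OF j])
  have "1 \<le> length L * node_weight M (L ! j)"
    using total sum_list_mono [of L "node_weight M" "\<lambda>_. node_weight M (L ! j)"] largest
    by (simp add: sum_list_triv)
  then have "1 / length L \<le> node_weight M (L ! j)"
    using j by (auto simp: divide_le_eq mult.commute)
  then have "4 * \<gamma>\<^sup>2 / k * (1 / length L) \<le> 4 * \<gamma>\<^sup>2 / k * node_weight M (L ! j)"
    by (rule mult_left_mono) simp
  then have "4 * \<gamma>\<^sup>2 / (k * length L) \<le> 4 * \<gamma>\<^sup>2 * node_weight M (L ! j) / k"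
    by simp
  also have "\<dots> \<le> node_gini M k (L ! j) - node_gini M k (L ! j \<inter> {x. h x = -1})
      - node_gini M k (L ! j \<inter> {x. h x = 1})"
    using assms by (intro split_gini_gain Lj) auto
  finally show "gini_entropy M k (split_leaf L j h) \<le> gini_entropy M k L - 4 * \<gamma>\<^sup>2 / (k * length L)"
    by (simp add: gini_entropy_eq_sum_node_gini sum_list_split_leaf [OF j])
qed

lemma greedy_growth_gini_bound:
  fixes hyp :: "nat \<Rightarrow> 'x \<Rightarrow> int"
  assumes "k > 0" "\<gamma> > 0"
    and root: "Ls 0 = [UNIV]"
    and sel_valid: "\<And>s. s < t \<Longrightarrow> sel s < length (Ls s)"
    and sel_largest: "\<And>s l. s < t \<Longrightarrow> l \<in> set (Ls s) \<Longrightarrow>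
                         node_weight M l \<le> node_weight M (Ls s ! sel s)"
    and hyp_meas: "\<And>s. s < t \<Longrightarrow> hyp s \<in> borel_measurable borel"
    and hyp_signs: "\<And>s. s < t \<Longrightarrow> AE z in M. hyp s (fst z) \<in> {-1, 1}"
    and balance: "\<And>s. s < t \<Longrightarrow>
        \<gamma> \<le> min (node_beta M (Ls s ! sel s) (hyp s)) (1 - node_beta M (Ls s ! sel s) (hyp s))"
    and purity: "\<And>s. s < t \<Longrightarrow> \<gamma> \<le> split_J M k (Ls s ! sel s) (hyp s) / 2"
    and step: "\<And>s. s < t \<Longrightarrow> Ls (Suc s) = split_leaf (Ls s) (sel s) (hyp s)"
  shows "gini_entropy M k (Ls t) \<le> node_gini M k UNIV - 4 * \<gamma>\<^sup>2 / k * harm t"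
proof -
  have "length (Ls s) = Suc s \<and> set (Ls s) \<subseteq> sets borel \<and> sum_list (map (node_weight M) (Ls s)) = 1
      \<and> gini_entropy M k (Ls s) \<le> node_gini M k UNIV - 4 * \<gamma>\<^sup>2 / k * harm s" if "s \<le> t" for s
    using that
  proof (induction s)
    case 0
    then show ?case
      by (simp add: root gini_entropy_eq_sum_node_gini node_weight_def prob_space harm_def)
  next
    case (Suc s)
    then have "s < t" by simp
    with Suc have IH: "length (Ls s) = Suc s" "set (Ls s) \<subseteq> sets borel"
      "sum_list (map (node_weight M) (Ls s)) = 1"
      "gini_entropy M k (Ls s) \<le> node_gini M k UNIV - 4 * \<gamma>\<^sup>2 / k * harm s"
      by auto
    have "\<forall>l\<in>set (Ls s). node_weight M l \<le> node_weight M (Ls s ! sel s)"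
      using sel_largest [OF \<open>s < t\<close>] by blast
    note split = greedy_split_step [OF sel_valid [OF \<open>s < t\<close>] IH(2,3) this
        hyp_meas [OF \<open>s < t\<close>] hyp_signs [OF \<open>s < t\<close>] assms(1,2)
        balance [OF \<open>s < t\<close>] purity [OF \<open>s < t\<close>]]
    have "4 * \<gamma>\<^sup>2 / k * harm (Suc s) = 4 * \<gamma>\<^sup>2 / k * harm s + 4 * \<gamma>\<^sup>2 / (k * length (Ls s))"
      by (simp add: IH(1) harm_Suc distrib_left divide_inverse mult_ac del: of_nat_Suc mult_Suc_right)
    then show ?case
      using split IH sel_valid [OF \<open>s < t\<close>]
      by (simp add: step [OF \<open>s < t\<close>] length_split_leaf)
  qed
  then show ?thesis by simp
qed

end

theorem theorem2:
  fixes M :: "((real ^ ('d::finite)) \<times> nat) measure"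
    and X :: "(real ^ 'd) set"
    and k :: nat and \<gamma> \<alpha> :: real and t :: nat
    and Ls :: "nat \<Rightarrow> (real ^ 'd) set list"
    and sel :: "nat \<Rightarrow> nat"
    and hyp :: "nat \<Rightarrow> real ^ 'd \<Rightarrow> int"
  assumes M: "prob_space M"
    and sets_M: "sets M = sets (borel \<Otimes>\<^sub>M count_space UNIV)"
    and X_supp: "AE z in M. fst z \<in> X"
    and labels: "AE z in M. snd z \<in> {1..k}"
    and k2: "k \<ge> 2"
    and gamma_pos: "\<gamma> > 0"
    and root: "Ls 0 = [UNIV]"
    and sel_valid: "\<And>s. s < t \<Longrightarrow> sel s < length (Ls s)"
    and sel_largest: "\<And>s l. s < t \<Longrightarrow> l \<in> set (Ls s) \<Longrightarrow>
                         node_weight M l \<le> node_weight M (Ls s ! sel s)"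
    and hyp_meas: "\<And>s. s < t \<Longrightarrow> hyp s \<in> borel_measurable borel"
    and hyp_vals: "\<And>s x. s < t \<Longrightarrow> x \<in> X \<Longrightarrow> hyp s x \<in> {-1, 1}"
    and WHA_beta: "\<And>s. s < t \<Longrightarrow>
        \<gamma> \<le> min (node_beta M (Ls s ! sel s) (hyp s)) (1 - node_beta M (Ls s ! sel s) (hyp s))"
    and WHA_J: "\<And>s. s < t \<Longrightarrow> split_J M k (Ls s ! sel s) (hyp s) / 2 \<ge> \<gamma>"
    and step: "\<And>s. s < t \<Longrightarrow> Ls (Suc s) = split_leaf (Ls s) (sel s) (hyp s)"
    and alpha_pos: "0 < \<alpha>"
    and alpha_le: "\<alpha> \<le> 2 * (1 - 1 / real k)"
    and t_large: "real t \<ge> (2 * (1 - 1 / real k) / \<alpha>) powr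
        (2 * (1 - \<gamma>)\<^sup>2 / (\<gamma>\<^sup>2 * log 2 (exp 1)) * (real k - 1))"
  shows "gini_entropy M k (Ls t) \<le> \<alpha>"
proof -
  interpret labelled_sample M
    using M sets_M by (intro labelled_sample.intro labelled_sample_axioms.intro)
  have "0 < (2 * (1 - 1 / real k) / \<alpha>) powr
        (2 * (1 - \<gamma>)\<^sup>2 / (\<gamma>\<^sup>2 * log 2 (exp 1)) * (real k - 1))"
    using k2 alpha_pos by (simp add: field_simps)
  with t_large have "0 < t" by linarith
  then have "\<gamma> \<le> 1/2" using WHA_beta [of 0] by simp
  have signs: "AE z in M. hyp s (fst z) \<in> {-1, 1}" if "s < t" for s
    using X_supp by eventually_elim (use hyp_vals [OF that] in auto)
  have "gini_entropy M k (Ls t) \<le> node_gini M k UNIV - 4 * \<gamma>\<^sup>2 / k * harm t"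
    using k2 gamma_pos root sel_valid sel_largest hyp_meas signs WHA_beta WHA_J step
    by (intro greedy_growth_gini_bound) auto
  also have "\<dots> \<le> (1 - 1 / k) - 4 * \<gamma>\<^sup>2 / k * ln (real t + 1)"
    using node_gini_UNIV_le [OF k2] mult_left_mono [OF ln_le_harm [of t], of "4 * \<gamma>\<^sup>2 / k"]
    by simp
  also have "\<dots> \<le> \<alpha>"
    using k2 gamma_pos \<open>\<gamma> \<le> 1/2\<close> alpha_pos t_large by (intro gini_bound_below_target) auto
  finally show ?thesis .
qed

end
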